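(* In the standing setting with the noisy iteration (I)–(III), for every $k\ge0$ (almost surely): $$m_f\|X^{(k+1)}-X^*\|^2\le\|U^{(k)}-U^*\|_G^2-\|U^{(k+1)}-U^*\|_G^2-\|U^{(k)}-U^{(k+1)}\|_G^2-\langle X^{(k+1)}-X^*,\sqrt2Dw^{(k+1)}\rangle.$$ Consequently, $$\Big\|X^{(k+1)}-X^*+\frac1{\sqrt2m_f}Dw^{(k+1)}\Big\|^2\le\frac1{m_f}\|U^{(k)}-U^*\|_G^2+\frac1{2m_f^2}\|Dw^{(k+1)}\|^2.$$
   Context: Standing setting. $\mathcal{G}=(\mathcal{V},\mathcal{E})$ is a connected undirected graph without self-loops on $\mathcal{V}=\{1,\dots,N\}$. Set $\mathcal{N}_i=\{j:(i,j)\in\mathcal{E}\}$ and $N_i=|\mathcal{N}_i|$. $\mathcal{A}$ is the set of directed arcs obtained by taking both orientations $(i,j)$ and $(j,i)$ of every edge of $\mathcal{E}$, so $|\mathcal{A}|=2|\mathcal{E}|$. Fix an enumeration $q=1,\dots,|\mathcal{A}|$ of $\mathcal{A}$. Each $f_i:\mathbb{R}^d\to\mathbb{R}$ is differentiable and $m_{f_i}$-strongly convex, i.e. $\langle\nabla f_i(u)-\nabla f_i(v),u-v\rangle\ge m_{f_i}\|u-v\|^2$ with $m_{f_i}>0$. Its gradient is $M_{f_i}$-Lipschitz. The function $\sum_i f_i$ has a (unique) minimizer $x^*$. For $X=(x_1,\dots,x_N)\in\mathbb{R}^{Nd}$ let $f(X)=\sum_i f_i(x_i)$, $m_f=\min_i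 m_{f_i}$ and $M_f=\max_i M_{f_i}$. $M_+,M_-\in\mathbb{R}^{Nd\times|\mathcal{A}|d}$ are block matrices with $d\times d$ blocks. If the $q$-th arc is $(i,j)$, then: - the $(i,q)$ and $(j,q)$ blocks of $M_+$ are $I_d$; - the $(i,q)$ block of $M_-$ is $I_d$ and its $(j,q)$ block is $-I_d$; - all other blocks are zero. $D=\mathrm{diag}(N_1,\dots,N_N)\otimes I_d$. $X^*=(x^*,\dots,x^* )$, $Z^*=\tfrac12M_+^TX^*$, and $\beta^*$ is the unique vector in the column space of $M_-^T$ with $\nabla f(X^* )+M_-\beta^*=0$. Set $U^*=(Z^*,\beta^* )$. For $\rho>0$, $G=\mathrm{diag}(\rho I_{|\mathcal{A}|d},\rho^{-1}I_{|\mathcal{A}|d})$ and $\|v\|_G^2=v^TGv$. Noisy iteration. Fix $\rho>0$. Let $w^{(1)},w^{(2)},\dots$ be i.i.d. $\mathcal{N}(0,I_{Nd})$, independent of a random initialization $(X^{(0)},\beta^{(0)})$ in which $\beta^{(0)}$ lies in the column space of $M_-^T$. Set $Z^{(0)}=\tfrac12M_+^TX^{(0)}$. For $k\ge0$ the random vectors $X^{(k+1)}\in\mathbb{R}^{Nd}$ and $Z^{(k+1)},\beta^{(k+1)}\in\mathbb{R}^{|\mathcal{A}|d}$ satisfy (I) $\nabla f(X^{(k+1)})+M_-\beta^{(k+1)}+\sqrt2Dw^{(k+1)}=\rho M_+(Z^{(k)}-Z^{(k+1)})$, (II) $\beta^{(k+1)}-\beta^{(k)}-\tfrac\rho2M_-^TX^{(k+1)}=0$,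 (III) $\tfrac12M_+^TX^{(k+1)}-Z^{(k+1)}=0$. Set $U^{(k)}=(Z^{(k)},\beta^{(k)})$. *)

theory Defs
  imports "HOL-Analysis.Analysis"
begin

text \<open>Vectors in R^{Nd} are represented
blockwise as functions nat => real^'d (block i = x_i, i in V), vectors in
R^{|A|d} as functions (nat*nat) => real^'d indexed directly by arcs (the
enumeration q of the arcs is immaterial).\<close>

definition verts :: "nat \<Rightarrow> nat set" where
  "verts N = {1..N}"

definition is_arc_set :: "nat \<Rightarrow> (nat \<times> nat) set \<Rightarrow> bool" where
  "is_arc_set N A \<longleftrightarrow> A \<subseteq> verts N \<times> verts N
     \<and> (\<forall>i j. (i, j) \<in> A \<longrightarrow> (j, i) \<in> A)
     \<and> (\<forall>i. (i, i) \<notin> A)"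

definition graph_connected :: "nat \<Rightarrow> (nat \<times> nat) set \<Rightarrow> bool" where
  "graph_connected N A \<longleftrightarrow> (\<forall>i\<in>verts N. \<forall>j\<in>verts N. (i, j) \<in> A\<^sup>*)"

definition deg :: "(nat \<times> nat) set \<Rightarrow> nat \<Rightarrow> nat" where
  "deg A i = card {j. (i, j) \<in> A}"

definition Mplus :: "(nat \<times> nat) set \<Rightarrow> (nat \<times> nat \<Rightarrow> real^'d) \<Rightarrow> nat \<Rightarrow> real^'d" where
  "Mplus A z i = (\<Sum>q\<in>A. (if fst q = i then z q else 0) + (if snd q = i then z q else 0))"

definition Mminus :: "(nat \<times> nat) set \<Rightarrow> (nat \<times> nat \<Rightarrow> real^'d) \<Rightarrow> nat \<Rightarrow> real^'d" where
  "Mminus A z i = (\<Sum>q\<in>A. (if fst q = i then z q else 0) - (if snd q = i then z q else 0))"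

definition MplusT :: "(nat \<Rightarrow> real^'d) \<Rightarrow> nat \<times> nat \<Rightarrow> real^'d" where
  "MplusT X q = X (fst q) + X (snd q)"

definition MminusT :: "(nat \<Rightarrow> real^'d) \<Rightarrow> nat \<times> nat \<Rightarrow> real^'d" where
  "MminusT X q = X (fst q) - X (snd q)"

definition Dop :: "(nat \<times> nat) set \<Rightarrow> (nat \<Rightarrow> real^'d) \<Rightarrow> nat \<Rightarrow> real^'d" where
  "Dop A X i = real (deg A i) *\<^sub>R X i"

definition vnorm2 :: "nat \<Rightarrow> (nat \<Rightarrow> real^'d) \<Rightarrow> real" where
  "vnorm2 N X = (\<Sum>i\<in>verts N. (norm (X i))\<^sup>2)"

definition vinner :: "nat \<Rightarrow> (nat \<Rightarrow> real^'d) \<Rightarrow> (nat \<Rightarrow> real^'d) \<Rightarrow> real" where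
  "vinner N X Y = (\<Sum>i\<in>verts N. X i \<bullet> Y i)"

definition Gnorm2 :: "(nat \<times> nat) set \<Rightarrow> real \<Rightarrow> (nat \<times> nat \<Rightarrow> real^'d) \<Rightarrow> (nat \<times> nat \<Rightarrow> real^'d) \<Rightarrow> real" where
  "Gnorm2 A \<rho> Z \<beta> = \<rho> * (\<Sum>q\<in>A. (norm (Z q))\<^sup>2) + (1 / \<rho>) * (\<Sum>q\<in>A. (norm (\<beta> q))\<^sup>2)"

end

theory Submission
  imports Defs
begin

text \<open>Pair the strong monotonicity of the gradients with \<open>e = X(k+1) - X*\<close> and
subtract the optimality condition from (I). Moving \<open>M+\<close> and \<open>M-\<close> to the other side
of the inner product, (II) and (III) identify \<open>M-\<^sup>T e\<close> with \<open>(2/\<rho>)(\<beta>(k+1) - \<beta>(k))\<close>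
and \<open>M+\<^sup>T e\<close> with \<open>2(Z(k+1) - Z*)\<close>, and the three-point identity
\<open>2\<langle>b - c, a - b\<rangle> = |a - c|\<^sup>2 - |b - c|\<^sup>2 - |a - b|\<^sup>2\<close> turns each arc term into the
stated difference of G-norms. The second inequality follows by dropping the two
nonnegative G-norms and completing the square in the noise term.\<close>

lemma inner_three_point:
  fixes a b c :: "'a::real_inner"
  shows "2 * ((b - c) \<bullet> (a - b)) = (norm (a - c))\<^sup>2 - (norm (b - c))\<^sup>2 - (norm (a - b))\<^sup>2"
  by (simp add: power2_norm_eq_inner inner_diff_left inner_diff_right inner_commute algebra_simps)

lemma sum_inner_incidence:
  fixes Y :: "'i \<Rightarrow> 'a::real_inner" and z :: "'q \<Rightarrow> 'a"
  assumes "finite V" "finite A" "g ` A \<subseteq> V"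
  shows "(\<Sum>i\<in>V. Y i \<bullet> (\<Sum>q\<in>A. if g q = i then z q else 0)) = (\<Sum>q\<in>A. Y (g q) \<bullet> z q)"
proof -
  have "(\<Sum>i\<in>V. Y i \<bullet> (\<Sum>q\<in>A. if g q = i then z q else 0))
      = (\<Sum>q\<in>A. \<Sum>i\<in>V. if g q = i then Y i \<bullet> z q else 0)"
    by (simp add: inner_sum_right if_distrib[of "inner _"] cong: if_cong) (rule sum.swap)
  also have "\<dots> = (\<Sum>q\<in>A. Y (g q) \<bullet> z q)"
    using assms by (intro sum.cong) (auto simp: sum.delta)
  finally show ?thesis .
qed

lemma arcs_subset_verts: "is_arc_set N A \<Longrightarrow> A \<subseteq> verts N \<times> verts N"
  by (simp add: is_arc_set_def)

lemma finite_arcs: "is_arc_set N A \<Longrightarrow> finite A"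
  by (metis arcs_subset_verts finite_SigmaI finite_atLeastAtMost finite_subset verts_def)

lemma sum_inner_Mminus:
  assumes "is_arc_set N A"
  shows "(\<Sum>i\<in>verts N. Y i \<bullet> Mminus A z i) = (\<Sum>q\<in>A. MminusT Y q \<bullet> z q)"
proof -
  have fin: "finite (verts N)" "finite A" and sub: "fst ` A \<subseteq> verts N" "snd ` A \<subseteq> verts N"
    using assms finite_arcs arcs_subset_verts by (fastforce simp: verts_def)+
  have "Mminus A z i = (\<Sum>q\<in>A. if fst q = i then z q else 0) - (\<Sum>q\<in>A. if snd q = i then z q else 0)"
    for i unfolding Mminus_def by (simp add: sum_subtractf)
  then show ?thesis
    by (simp add: inner_diff_right sum_subtractf sum_inner_incidence[OF fin sub(1)]
        sum_inner_incidence[OF fin sub(2)] MminusT_def inner_diff_left)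
qed

lemma sum_inner_Mplus:
  assumes "is_arc_set N A"
  shows "(\<Sum>i\<in>verts N. Y i \<bullet> Mplus A z i) = (\<Sum>q\<in>A. MplusT Y q \<bullet> z q)"
proof -
  have fin: "finite (verts N)" "finite A" and sub: "fst ` A \<subseteq> verts N" "snd ` A \<subseteq> verts N"
    using assms finite_arcs arcs_subset_verts by (fastforce simp: verts_def)+
  have "Mplus A z i = (\<Sum>q\<in>A. if fst q = i then z q else 0) + (\<Sum>q\<in>A. if snd q = i then z q else 0)"
    for i unfolding Mplus_def by (simp add: sum.distrib)
  then show ?thesis
    by (simp add: inner_add_right sum.distrib sum_inner_incidence[OF fin sub(1)]
        sum_inner_incidence[OF fin sub(2)] MplusT_def inner_add_left)
qed

lemma Mminus_diff: "Mminus A z i - Mminus A z' i = Mminus A (\<lambda>q. z q - z' q) i"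
  unfolding Mminus_def sum_subtractf[symmetric] by (intro sum.cong) auto

lemma Gnorm2_nonneg: "\<rho> > 0 \<Longrightarrow> Gnorm2 A \<rho> Z \<beta> \<ge> 0"
  unfolding Gnorm2_def by (intro add_nonneg_nonneg mult_nonneg_nonneg sum_nonneg) auto

lemma vnorm2_add_scaleR:
  "vnorm2 N (\<lambda>i. X i + c *\<^sub>R Y i) = vnorm2 N X + 2 * c * vinner N X Y + c\<^sup>2 * vnorm2 N Y"
proof -
  have "(norm (X i + c *\<^sub>R Y i))\<^sup>2 = (norm (X i))\<^sup>2 + 2 * c * (X i \<bullet> Y i) + c\<^sup>2 * (norm (Y i))\<^sup>2" for i
    by (simp only: power2_norm_eq_inner)
      (simp add: inner_add_left inner_add_right inner_commute algebra_simps power2_eq_square)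
  then show ?thesis
    unfolding vnorm2_def vinner_def by (simp add: sum.distrib sum_distrib_left)
qed

lemma vnorm2_complete_square:
  assumes "m > 0" and "m * vnorm2 N X + sqrt 2 * vinner N X Y \<le> G"
  shows "vnorm2 N (\<lambda>i. X i + (1 / (sqrt 2 * m)) *\<^sub>R Y i) \<le> (1 / m) * G + (1 / (2 * m\<^sup>2)) * vnorm2 N Y"
proof -
  have "vnorm2 N (\<lambda>i. X i + (1 / (sqrt 2 * m)) *\<^sub>R Y i)
      = (1 / m) * (m * vnorm2 N X + sqrt 2 * vinner N X Y) + (1 / (2 * m\<^sup>2)) * vnorm2 N Y"
    unfolding vnorm2_add_scaleR using \<open>m > 0\<close>
    by (simp add: power2_eq_square field_simps)
  also have "\<dots> \<le> (1 / m) * G + (1 / (2 * m\<^sup>2)) * vnorm2 N Y"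
    using assms by (simp add: divide_right_mono)
  finally show ?thesis .
qed

text \<open>\<open>E\<close> plays the role of the noise term \<open>\<surd>2 D w(k+1)\<close> in (I); any perturbation works.\<close>

lemma perturbed_step_descent:
  fixes xstar :: "real^'d" and E X1 :: "nat \<Rightarrow> real^'d"
  defines "Zstar \<equiv> (\<lambda>q. (1/2) *\<^sub>R MplusT (\<lambda>i::nat. xstar) q)"
  assumes arcs: "is_arc_set N A" and "\<rho> > 0"
    and strong: "\<And>i u v. i \<in> verts N \<Longrightarrow> (gradf i u - gradf i v) \<bullet> (u - v) \<ge> m * (norm (u - v))\<^sup>2"
    and kkt: "\<And>i. i \<in> verts N \<Longrightarrow> gradf i xstar + Mminus A \<beta>star i = 0"
    and I: "\<And>i. i \<in> verts N \<Longrightarrow> gradf i (X1 i) + Mminus A \<beta>1 i + E i = \<rho> *\<^sub>R Mplus A (\<lambda>q. Z0 q - Z1 q) i"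
    and II: "\<And>q. q \<in> A \<Longrightarrow> \<beta>1 q - \<beta>0 q - (\<rho>/2) *\<^sub>R MminusT X1 q = 0"
    and III: "\<And>q. q \<in> A \<Longrightarrow> (1/2) *\<^sub>R MplusT X1 q - Z1 q = 0"
  shows "m * vnorm2 N (\<lambda>i. X1 i - xstar)
    \<le> Gnorm2 A \<rho> (\<lambda>q. Z0 q - Zstar q) (\<lambda>q. \<beta>0 q - \<beta>star q)
      - Gnorm2 A \<rho> (\<lambda>q. Z1 q - Zstar q) (\<lambda>q. \<beta>1 q - \<beta>star q)
      - Gnorm2 A \<rho> (\<lambda>q. Z0 q - Z1 q) (\<lambda>q. \<beta>0 q - \<beta>1 q)
      - vinner N (\<lambda>i. X1 i - xstar) E"
proof -
  define e where "e = (\<lambda>i. X1 i - xstar)"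
  have grad_gap: "gradf i (X1 i) - gradf i xstar
      = \<rho> *\<^sub>R Mplus A (\<lambda>q. Z0 q - Z1 q) i - Mminus A (\<lambda>q. \<beta>1 q - \<beta>star q) i - E i"
    if "i \<in> verts N" for i
    using I[OF that] kkt[OF that]
    by (simp add: Mminus_diff[symmetric] algebra_simps eq_diff_eq add_eq_0_iff)
  have MminusT_e: "MminusT e q = (2/\<rho>) *\<^sub>R (\<beta>1 q - \<beta>0 q)" if "q \<in> A" for q
  proof -
    have "\<beta>1 q - \<beta>0 q = (\<rho>/2) *\<^sub>R MminusT X1 q"
      using II[OF that] by simp
    then have "(2/\<rho>) *\<^sub>R (\<beta>1 q - \<beta>0 q) = MminusT X1 q"
      using \<open>\<rho> > 0\<close> by simp
    then show ?thesis
      by (simp add: MminusT_def e_def)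
  qed
  have MplusT_e: "MplusT e q = 2 *\<^sub>R (Z1 q - Zstar q)" if "q \<in> A" for q
  proof -
    have "Z1 q = (1/2) *\<^sub>R MplusT X1 q"
      using III[OF that] by simp
    then show ?thesis
      by (simp add: MplusT_def e_def Zstar_def algebra_simps)
  qed
  have arc_term: "\<rho> * (MplusT e q \<bullet> (Z0 q - Z1 q)) - MminusT e q \<bullet> (\<beta>1 q - \<beta>star q)
     = \<rho> * ((norm (Z0 q - Zstar q))\<^sup>2 - (norm (Z1 q - Zstar q))\<^sup>2 - (norm (Z0 q - Z1 q))\<^sup>2)
       + (1/\<rho>) * ((norm (\<beta>0 q - \<beta>star q))\<^sup>2 - (norm (\<beta>1 q - \<beta>star q))\<^sup>2 - (norm (\<beta>0 q - \<beta>1 q))\<^sup>2)"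
    if "q \<in> A" for q
  proof -
    have "- (MminusT e q \<bullet> (\<beta>1 q - \<beta>star q)) = (1/\<rho>) * (2 * ((\<beta>1 q - \<beta>star q) \<bullet> (\<beta>0 q - \<beta>1 q)))"
      using \<open>\<rho> > 0\<close>
      by (simp add: MminusT_e[OF that] inner_diff_left inner_diff_right inner_commute field_simps)
    then show ?thesis
      using inner_three_point[of "Z1 q" "Zstar q" "Z0 q"] inner_three_point[of "\<beta>1 q" "\<beta>star q" "\<beta>0 q"]
      by (simp add: MplusT_e[OF that])
  qed
  have "m * vnorm2 N e \<le> (\<Sum>i\<in>verts N. e i \<bullet> (gradf i (X1 i) - gradf i xstar))"
    unfolding vnorm2_def sum_distrib_left
    using strong by (intro sum_mono) (simp add: e_def inner_commute)
  also have "\<dots> = \<rho> * (\<Sum>i\<in>verts N. e i \<bullet> Mplus A (\<lambda>q. Z0 q - Z1 q) i)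
      - (\<Sum>i\<in>verts N. e i \<bullet> Mminus A (\<lambda>q. \<beta>1 q - \<beta>star q) i) - vinner N e E"
    unfolding vinner_def
    by (simp add: grad_gap inner_diff_right sum_subtractf sum_distrib_left cong: sum.cong)
  also have "\<dots> = (\<Sum>q\<in>A. \<rho> * (MplusT e q \<bullet> (Z0 q - Z1 q)) - MminusT e q \<bullet> (\<beta>1 q - \<beta>star q))
      - vinner N e E"
    by (simp add: sum_inner_Mplus[OF arcs] sum_inner_Mminus[OF arcs] sum_subtractf sum_distrib_left)
  also have "\<dots> = Gnorm2 A \<rho> (\<lambda>q. Z0 q - Zstar q) (\<lambda>q. \<beta>0 q - \<beta>star q)
      - Gnorm2 A \<rho> (\<lambda>q. Z1 q - Zstar q) (\<lambda>q. \<beta>1 q - \<beta>star q)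
      - Gnorm2 A \<rho> (\<lambda>q. Z0 q - Z1 q) (\<lambda>q. \<beta>0 q - \<beta>1 q) - vinner N e E"
    by (simp only: sum.cong[OF refl arc_term])
      (simp add: Gnorm2_def right_diff_distrib diff_divide_distrib sum.distrib sum_subtractf
        sum_distrib_left)
  finally show ?thesis unfolding e_def .
qed

theorem mainTheorem5:
  fixes N :: nat and A :: "(nat \<times> nat) set"
    and f :: "nat \<Rightarrow> real^'d \<Rightarrow> real" and gradf :: "nat \<Rightarrow> real^'d \<Rightarrow> real^'d"
    and mf Mf :: "nat \<Rightarrow> real"
    and xstar :: "real^'d" and \<beta>star :: "nat \<times> nat \<Rightarrow> real^'d"
    and \<rho> :: real
    and X :: "nat \<Rightarrow> nat \<Rightarrow> real^'d"
    and Z \<beta> :: "nat \<Rightarrow> nat \<times> nat \<Rightarrow> real^'d"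
    and w :: "nat \<Rightarrow> nat \<Rightarrow> real^'d"
  defines "V \<equiv> verts N"
  defines "Xstar \<equiv> (\<lambda>i::nat. xstar)"
  defines "Zstar \<equiv> (\<lambda>q. (1/2) *\<^sub>R MplusT Xstar q)"
  defines "mfmin \<equiv> Min (mf ` V)"
  assumes N_pos: "N \<ge> 1"
    and arcs: "is_arc_set N A"
    and conn: "graph_connected N A"
    and grad: "\<And>i x. i \<in> V \<Longrightarrow> (f i has_derivative (\<lambda>h. gradf i x \<bullet> h)) (at x)"
    and mf_pos: "\<And>i. i \<in> V \<Longrightarrow> mf i > 0"
    and strong: "\<And>i u v. i \<in> V \<Longrightarrow> (gradf i u - gradf i v) \<bullet> (u - v) \<ge> mf i * (norm (u - v))\<^sup>2"
    and lips: "\<And>i u v. i \<in> V \<Longrightarrow> norm (gradf i u - gradf i v) \<le> Mf i * norm (u - v)"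
    and xstar_min: "\<And>y. (\<Sum>i\<in>V. f i xstar) \<le> (\<Sum>i\<in>V. f i y)"
    and \<beta>star_range: "\<exists>Y. \<forall>q\<in>A. \<beta>star q = MminusT Y q"
    and \<beta>star_kkt: "\<And>i. i \<in> V \<Longrightarrow> gradf i xstar + Mminus A \<beta>star i = 0"
    and \<rho>_pos: "\<rho> > 0"
    and \<beta>0_range: "\<exists>Y. \<forall>q\<in>A. \<beta> 0 q = MminusT Y q"
    and Z0: "\<And>q. q \<in> A \<Longrightarrow> Z 0 q = (1/2) *\<^sub>R MplusT (X 0) q"
    and iterI: "\<And>k i. i \<in> V \<Longrightarrow>
        gradf i (X (Suc k) i) + Mminus A (\<beta> (Suc k)) i + sqrt 2 *\<^sub>R Dop A (w (Suc k)) i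
        = \<rho> *\<^sub>R Mplus A (\<lambda>q. Z k q - Z (Suc k) q) i"
    and iterII: "\<And>k q. q \<in> A \<Longrightarrow>
        \<beta> (Suc k) q - \<beta> k q - (\<rho>/2) *\<^sub>R MminusT (X (Suc k)) q = 0"
    and iterIII: "\<And>k q. q \<in> A \<Longrightarrow>
        (1/2) *\<^sub>R MplusT (X (Suc k)) q - Z (Suc k) q = 0"
  shows "\<forall>k.
      mfmin * vnorm2 N (\<lambda>i. X (Suc k) i - Xstar i)
        \<le> Gnorm2 A \<rho> (\<lambda>q. Z k q - Zstar q) (\<lambda>q. \<beta> k q - \<beta>star q)
          - Gnorm2 A \<rho> (\<lambda>q. Z (Suc k) q - Zstar q) (\<lambda>q. \<beta> (Suc k) q - \<beta>star q)
          - Gnorm2 A \<rho> (\<lambda>q. Z k q - Z (Suc k) q) (\<lambda>q. \<beta> k q - \<beta> (Suc k) q)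
          - vinner N (\<lambda>i. X (Suc k) i - Xstar i) (\<lambda>i. sqrt 2 *\<^sub>R Dop A (w (Suc k)) i)
    \<and> vnorm2 N (\<lambda>i. X (Suc k) i - Xstar i + (1 / (sqrt 2 * mfmin)) *\<^sub>R Dop A (w (Suc k)) i)
        \<le> (1 / mfmin) * Gnorm2 A \<rho> (\<lambda>q. Z k q - Zstar q) (\<lambda>q. \<beta> k q - \<beta>star q)
          + (1 / (2 * mfmin\<^sup>2)) * vnorm2 N (Dop A (w (Suc k)))"
proof -
  have finV: "finite V" and V_ne: "V \<noteq> {}"
    using N_pos by (auto simp: V_def verts_def)
  have mfmin_pos: "mfmin > 0"
    unfolding mfmin_def using finV V_ne mf_pos by simp
  have strong_mfmin: "mfmin * (norm (u - v))\<^sup>2 \<le> (gradf i u - gradf i v) \<bullet> (u - v)"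
    if "i \<in> V" for i u v
    using strong[OF that] Min_le[OF finite_imageI[OF finV] imageI[OF that]]
    by (smt (verit) mfmin_def mult_right_mono zero_le_power2)
  have descent: "mfmin * vnorm2 N (\<lambda>i. X (Suc k) i - xstar)
    \<le> Gnorm2 A \<rho> (\<lambda>q. Z k q - Zstar q) (\<lambda>q. \<beta> k q - \<beta>star q)
      - Gnorm2 A \<rho> (\<lambda>q. Z (Suc k) q - Zstar q) (\<lambda>q. \<beta> (Suc k) q - \<beta>star q)
      - Gnorm2 A \<rho> (\<lambda>q. Z k q - Z (Suc k) q) (\<lambda>q. \<beta> k q - \<beta> (Suc k) q)
      - vinner N (\<lambda>i. X (Suc k) i - xstar) (\<lambda>i. sqrt 2 *\<^sub>R Dop A (w (Suc k)) i)"
    for k unfolding Zstar_def Xstar_def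
    using strong_mfmin \<beta>star_kkt iterI iterII iterIII
    by (intro perturbed_step_descent[OF arcs \<rho>_pos]) (auto simp: V_def)
  have "mfmin * vnorm2 N (\<lambda>i. X (Suc k) i - xstar)
      + sqrt 2 * vinner N (\<lambda>i. X (Suc k) i - xstar) (Dop A (w (Suc k)))
      \<le> Gnorm2 A \<rho> (\<lambda>q. Z k q - Zstar q) (\<lambda>q. \<beta> k q - \<beta>star q)" for k
  proof -
    have "vinner N (\<lambda>i. X (Suc k) i - xstar) (\<lambda>i. sqrt 2 *\<^sub>R Dop A (w (Suc k)) i)
        = sqrt 2 * vinner N (\<lambda>i. X (Suc k) i - xstar) (Dop A (w (Suc k)))"
      by (simp add: vinner_def sum_distrib_left)
    with descent[of k] Gnorm2_nonneg[OF \<rho>_pos, of A "\<lambda>q. Z (Suc k) q - Zstar q" "\<lambda>q. \<beta> (Suc k) q - \<beta>star q"]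
    Gnorm2_nonneg[OF \<rho>_pos, of A "\<lambda>q. Z k q - Z (Suc k) q" "\<lambda>q. \<beta> k q - \<beta> (Suc k) q"]
    show ?thesis
      by linarith
  qed
  note completed = vnorm2_complete_square[OF mfmin_pos this]
  show ?thesis
    unfolding Xstar_def using descent completed by simp
qed

end
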